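(* Let $d\geq 2$ and let $G$ be a graph of order $n\geq 2$. (1) If there are distinct vertices $u,v$ with $N_G[v]\subseteq N_G[u]$, then $BI_d(G)\simeq BI_d(G-v)$. (2) If there are distinct vertices $u,v$ with $N_G(v)\subseteq N_G(u)$, then $BI_d(G)\simeq BI_d(G-v)\vee\Sigma\,\mathrm{lk}_{BI_d(G)}(v)$.
   Context: All graphs are finite and simple; $\alpha(G)$ is the independence number, $G[S]$ the induced subgraph on $S$, $G-v=G[V(G)\setminus\{v\}]$, $N_G(v)$ the open and $N_G[v]=N_G(v)\cup\{v\}$ the closed neighborhood. $BI_d(G)=\{\sigma\subseteq V(G):\ \alpha(G[\sigma])<d\}$. For a simplicial complex $K$ and vertex $v$, $\mathrm{lk}_K(v)=\{\tau\in K: v\notin\tau,\ \tau\cup\{v\}\in K\}$. $\Sigma$ denotes suspension and $\vee$ wedge sum. *)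

theory Defs
  imports "HOL-Analysis.Analysis"
begin

definition simple_graph :: "'a set \<Rightarrow> ('a \<Rightarrow> 'a \<Rightarrow> bool) \<Rightarrow> bool" where
  "simple_graph V E \<longleftrightarrow> finite V \<and> (\<forall>x y. E x y \<longrightarrow> x \<in> V \<and> y \<in> V)
     \<and> (\<forall>x y. E x y \<longrightarrow> E y x) \<and> (\<forall>x. \<not> E x x)"

definition open_nbhd :: "'a set \<Rightarrow> ('a \<Rightarrow> 'a \<Rightarrow> bool) \<Rightarrow> 'a \<Rightarrow> 'a set" where
  "open_nbhd V E v = {u \<in> V. E v u}"

definition closed_nbhd :: "'a set \<Rightarrow> ('a \<Rightarrow> 'a \<Rightarrow> bool) \<Rightarrow> 'a \<Rightarrow> 'a set" where
  "closed_nbhd V E v = insert v (open_nbhd V E v)"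

text \<open>G - v: vertex set V - {v}, edges among remaining vertices.\<close>
definition del_edges :: "('a \<Rightarrow> 'a \<Rightarrow> bool) \<Rightarrow> 'a \<Rightarrow> 'a \<Rightarrow> 'a \<Rightarrow> bool" where
  "del_edges E v = (\<lambda>x y. E x y \<and> x \<noteq> v \<and> y \<noteq> v)"

definition indep :: "('a \<Rightarrow> 'a \<Rightarrow> bool) \<Rightarrow> 'a set \<Rightarrow> bool" where
  "indep E S \<longleftrightarrow> (\<forall>x\<in>S. \<forall>y\<in>S. \<not> E x y)"

definition alpha :: "('a \<Rightarrow> 'a \<Rightarrow> bool) \<Rightarrow> 'a set \<Rightarrow> nat" where
  "alpha E \<sigma> = Max (card ` {S. S \<subseteq> \<sigma> \<and> indep E S})"

definition BI :: "nat \<Rightarrow> 'a set \<Rightarrow> ('a \<Rightarrow> 'a \<Rightarrow> bool) \<Rightarrow> 'a set set" where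
  "BI d V E = {\<sigma>. \<sigma> \<subseteq> V \<and> alpha E \<sigma> < d}"

text \<open>Simplicial complexes are represented as (finite) downward closed families of finite sets.\<close>
definition link :: "'a set set \<Rightarrow> 'a \<Rightarrow> 'a set set" where
  "link K v = {\<tau> \<in> K. v \<notin> \<tau> \<and> insert v \<tau> \<in> K}"

text \<open>Suspension: join with the two-point complex S^0 (poles Inr True, Inr False).\<close>
definition susp :: "'a set set \<Rightarrow> ('a + bool) set set" where
  "susp K = {Inl ` \<sigma> \<union> Inr ` T | \<sigma> T. \<sigma> \<in> K \<and> T \<noteq> UNIV}"

definition wedge :: "'a set set \<Rightarrow> 'b set set \<Rightarrow> 'a \<Rightarrow> 'b \<Rightarrow> ('a + 'b) set set" where
  "wedge K L a0 b0 = (image Inl) ` K \<union> (image (\<lambda>y. if y = b0 then Inl a0 else Inr y)) ` L"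

text \<open>Geometric realization: barycentric coordinate functions supported on a face.\<close>
definition geom :: "'a set set \<Rightarrow> ('a \<Rightarrow> real) topology" where
  "geom K = subtopology (powertop_real UNIV)
     {f. (\<forall>x. 0 \<le> f x) \<and> finite {x. f x \<noteq> 0} \<and> {x. f x \<noteq> 0} \<in> K \<and> sum f {x. f x \<noteq> 0} = 1}"

definition htpy_eq :: "'a set set \<Rightarrow> 'b set set \<Rightarrow> bool" (infix "\<simeq>\<^sub>c" 50) where
  "K \<simeq>\<^sub>c L \<longleftrightarrow> geom K homotopy_equivalent_space geom L"

end

(* Both parts rest on one exchange argument: if every neighbour of v other than u is a neighbour
   of u, an independent set containing u may trade u for v. Hence, if N[v] is contained in N[u],
   every face of K = BI_d(G) through v extends by u, so v is dominated, and moving the barycentric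
   weight of v onto u retracts K onto the deletion K' of v. If N(v) is contained in N(u), every
   face of the link L of v extends by u inside K'. Then K is K' with the cone v * L attached along
   L, and since L already lies in the contractible cone u * L inside K', this is homotopy
   equivalent to attaching a suspension of L at the single point u, i.e. to K' wedge Sigma L.
   Both equivalences are written out in barycentric coordinates, and every homotopy is the
   straight-line homotopy between contiguous maps. *)

theory Submission
  imports Defs
begin

section \<open>Geometric realizations of downward closed families\<close>

definition down_closed :: "'a set set \<Rightarrow> bool" where
  "down_closed K \<longleftrightarrow> (\<forall>\<sigma>\<in>K. \<forall>\<tau>\<subseteq>\<sigma>. \<tau> \<in> K)"

lemma down_closedD: "down_closed K \<Longrightarrow> \<sigma> \<in> K \<Longrightarrow> \<tau> \<subseteq> \<sigma> \<Longrightarrow> \<tau> \<in> K"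
  unfolding down_closed_def by blast

abbreviation supp :: "('a \<Rightarrow> real) \<Rightarrow> 'a set" where
  "supp f \<equiv> {x. f x \<noteq> 0}"

lemma topspace_geom:
  "topspace (geom K) = {f. (\<forall>x. 0 \<le> f x) \<and> finite (supp f) \<and> supp f \<in> K \<and> sum f (supp f) = 1}"
  by (simp add: geom_def)

lemma geom_pointI:
  assumes "down_closed K" "\<sigma> \<in> K" "supp f \<subseteq> \<sigma>" "finite F" "supp f \<subseteq> F"
    and "\<And>x. 0 \<le> f x" "sum f F = 1"
  shows "f \<in> topspace (geom K)"
proof -
  have "sum f (supp f) = sum f F"
    by (rule sum.mono_neutral_left) (use assms(4,5) in auto)
  then show ?thesis
    using assms down_closedD[OF assms(1-3)] finite_subset[OF assms(5,4)] by (simp add: topspace_geom)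
qed

lemma geom_pointD:
  assumes "f \<in> topspace (geom K)"
  shows "\<And>x. 0 \<le> f x" "finite (supp f)" "supp f \<in> K"
    and "\<And>F. finite F \<Longrightarrow> supp f \<subseteq> F \<Longrightarrow> sum f F = 1"
proof -
  show "\<And>x. 0 \<le> f x" "finite (supp f)" "supp f \<in> K"
    using assms by (auto simp: topspace_geom)
  fix F assume "finite F" "supp f \<subseteq> F"
  then have "sum f (supp f) = sum f F"
    by (intro sum.mono_neutral_left) auto
  then show "sum f F = 1" using assms by (simp add: topspace_geom)
qed

lemma continuous_map_geom_coordinate [continuous_intros]:
  "continuous_map (geom K) euclideanreal (\<lambda>f. f x)"
  unfolding geom_def by (intro continuous_intros) auto

lemma continuous_map_into_geom:
  assumes "\<And>p. p \<in> topspace X \<Longrightarrow> F p \<in> topspace (geom K)"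
    and "\<And>x. continuous_map X euclideanreal (\<lambda>p. F p x)"
  shows "continuous_map X (geom K) F"
  unfolding geom_def continuous_map_in_subtopology continuous_map_componentwise_UNIV
  using assms by (auto simp: topspace_geom)

text \<open>The straight-line homotopy stays in the face spanned by the two supports.\<close>
lemma homotopic_geom_if_contiguous:
  assumes K: "down_closed K"
    and P: "continuous_map X (geom K) P" and Q: "continuous_map X (geom K) Q"
    and contiguous: "\<And>p. p \<in> topspace X \<Longrightarrow> supp (P p) \<union> supp (Q p) \<in> K"
  shows "homotopic_with (\<lambda>_. True) X (geom K) P Q"
proof -
  define h where "h = (\<lambda>(s::real, p) x. (1 - s) * P p x + s * Q p x)"
  have "continuous_map (prod_topology (top_of_set {0..1}) X) (geom K) h"
  proof (rule continuous_map_into_geom)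
    fix x
    have "continuous_map X euclideanreal (\<lambda>p. P p x)" "continuous_map X euclideanreal (\<lambda>p. Q p x)"
      using continuous_map_compose[OF P continuous_map_geom_coordinate]
        continuous_map_compose[OF Q continuous_map_geom_coordinate] by (simp_all add: o_def)
    then show "continuous_map (prod_topology (top_of_set {0..1}) X) euclideanreal (\<lambda>z. h z x)"
      unfolding h_def case_prod_unfold
      by (intro continuous_intros continuous_map_compose[OF continuous_map_snd, unfolded o_def]
          continuous_map_into_fulltopology[OF continuous_map_fst]) auto
  next
    fix z assume "z \<in> topspace (prod_topology (top_of_set {0..1::real}) X)"
    then obtain s p where z: "z = (s, p)" "0 \<le> s" "s \<le> 1" "p \<in> topspace X"
      by (cases z) auto
    have Pp: "P p \<in> topspace (geom K)" and Qp: "Q p \<in> topspace (geom K)"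
      using P Q z(4) by (auto dest: continuous_map_image_subset_topspace)
    define S where "S = supp (P p) \<union> supp (Q p)"
    have S: "finite S" "S \<in> K"
      using geom_pointD(2)[OF Pp] geom_pointD(2)[OF Qp] contiguous[OF z(4)] by (auto simp: S_def)
    show "h z \<in> topspace (geom K)"
    proof (rule geom_pointI[OF K S(2) _ S(1)])
      show "0 \<le> h z x" for x
        using z geom_pointD(1)[OF Pp] geom_pointD(1)[OF Qp] by (simp add: h_def)
      have "sum (h z) S = (1 - s) * sum (P p) S + s * sum (Q p) S"
        by (simp add: h_def z sum.distrib sum_distrib_left)
      also have "\<dots> = 1" using geom_pointD(4)[OF Pp S(1)] geom_pointD(4)[OF Qp S(1)] by (simp add: S_def)
      finally show "sum (h z) S = 1" .
    qed (auto simp: h_def z S_def)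
  qed
  moreover have "h (0, p) = P p" "h (1, p) = Q p" for p by (auto simp: h_def)
  ultimately show ?thesis unfolding homotopic_with_def by (intro exI[of _ h]) auto
qed

section \<open>Deleting a dominated vertex\<close>

definition move_mass :: "'a \<Rightarrow> 'a \<Rightarrow> ('a \<Rightarrow> real) \<Rightarrow> 'a \<Rightarrow> real" where
  "move_mass u v f = (\<lambda>x. if x = v then 0 else if x = u then f u + f v else f x)"

lemma sum_move_mass:
  assumes "finite F" "u \<in> F" "v \<in> F" "u \<noteq> v"
  shows "sum (move_mass u v f) F = sum f F"
proof -
  have split: "sum g F = g v + g u + sum g (F - {v} - {u})" for g :: "'a \<Rightarrow> real"
    using assms sum.remove[of F v g] sum.remove[of "F - {v}" u g] by simp
  show ?thesis
    unfolding split[of f] split[of "move_mass u v f"] using assms(4)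
    by (simp add: move_mass_def)
qed

lemma continuous_map_geom_mono: "K' \<subseteq> K \<Longrightarrow> continuous_map (geom K') (geom K) id"
  by (rule continuous_map_into_geom) (auto simp: topspace_geom intro: continuous_intros)

lemma move_mass_in_geom_deletion:
  assumes K: "down_closed K" and "u \<noteq> v"
    and dominated: "\<And>\<sigma>. \<sigma> \<in> K \<Longrightarrow> v \<in> \<sigma> \<Longrightarrow> insert u \<sigma> \<in> K"
    and f: "f \<in> topspace (geom K)"
  shows "move_mass u v f \<in> topspace (geom {\<sigma> \<in> K. v \<notin> \<sigma>})"
proof -
  define F where "F = insert u (insert v (supp f))"
  define \<tau> where "\<tau> = (if f v = 0 then supp f else insert u (supp f - {v}))"
  have \<tau>: "\<tau> \<in> {\<sigma> \<in> K. v \<notin> \<sigma>}"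
  proof (cases "f v = 0")
    case False
    then have "insert u (supp f) \<in> K" using dominated[OF geom_pointD(3)[OF f]] by simp
    then have "insert u (supp f - {v}) \<in> K" by (rule down_closedD[OF K]) blast
    with False show ?thesis using \<open>u \<noteq> v\<close> by (simp add: \<tau>_def)
  qed (use geom_pointD(3)[OF f] in \<open>simp add: \<tau>_def\<close>)
  have F: "finite F" using geom_pointD(2)[OF f] by (simp add: F_def)
  have "down_closed {\<sigma> \<in> K. v \<notin> \<sigma>}" using K unfolding down_closed_def by blast
  then show ?thesis
  proof (rule geom_pointI[OF _ \<tau> _ F])
    show "supp (move_mass u v f) \<subseteq> \<tau>" "supp (move_mass u v f) \<subseteq> F"
      by (auto simp: move_mass_def \<tau>_def F_def)
    show "0 \<le> move_mass u v f x" for x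
      using geom_pointD(1)[OF f] by (simp add: move_mass_def)
    show "sum (move_mass u v f) F = 1"
      using sum_move_mass[OF F, of u v f] geom_pointD(4)[OF f F] \<open>u \<noteq> v\<close> by (auto simp: F_def)
  qed
qed

text \<open>Moving the weight of \<open>v\<close> onto \<open>u\<close> retracts onto the deletion; the hypothesis keeps the
  straight-line homotopy back to the identity inside \<open>K\<close>.\<close>
theorem htpy_eq_delete_dominated_vertex:
  assumes K: "down_closed K" and "u \<noteq> v"
    and dominated: "\<And>\<sigma>. \<sigma> \<in> K \<Longrightarrow> v \<in> \<sigma> \<Longrightarrow> insert u \<sigma> \<in> K"
  shows "K \<simeq>\<^sub>c {\<sigma> \<in> K. v \<notin> \<sigma>}"
proof -
  define K' where "K' = {\<sigma> \<in> K. v \<notin> \<sigma>}"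
  have r: "continuous_map (geom K) (geom K') (move_mass u v)"
    using move_mass_in_geom_deletion[OF assms] unfolding K'_def[symmetric]
    by (rule continuous_map_into_geom) (auto simp: move_mass_def intro!: continuous_intros)
  have i: "continuous_map (geom K') (geom K) id"
    by (rule continuous_map_geom_mono) (simp add: K'_def)
  have "homotopic_with (\<lambda>_. True) (geom K) (geom K) (id \<circ> move_mass u v) id"
  proof (rule homotopic_geom_if_contiguous[OF K continuous_map_compose[OF r i]])
    fix f assume f: "f \<in> topspace (geom K)"
    have "supp (move_mass u v f) \<union> supp f \<subseteq> (if f v = 0 then supp f else insert u (supp f))"
      by (auto simp: move_mass_def)
    then show "supp ((id \<circ> move_mass u v) f) \<union> supp (id f) \<in> K"
      using down_closedD[OF K] geom_pointD(3)[OF f] dominated[OF geom_pointD(3)[OF f]]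
      by (simp split: if_splits)
  qed simp
  moreover have "homotopic_with (\<lambda>_. True) (geom K') (geom K') (move_mass u v \<circ> id) id"
  proof (rule homotopic_with_equal)
    show "continuous_map (geom K') (geom K') (move_mass u v \<circ> id)"
      using continuous_map_compose[OF i r] .
    fix f assume "f \<in> topspace (geom K')"
    then have "f v = 0" by (auto simp: topspace_geom K'_def)
    then show "(move_mass u v \<circ> id) f = id f" by (auto simp: move_mass_def)
  qed auto
  ultimately show ?thesis
    unfolding htpy_eq_def homotopy_equivalent_space_def K'_def[symmetric] using r i by blast
qed

section \<open>A vertex whose link is coned off in the deletion\<close>

lemma down_closed_image: "down_closed K \<Longrightarrow> down_closed ((`) h ` K)"
  unfolding down_closed_def
proof (intro ballI allI impI)
  fix F G assume K: "\<forall>\<sigma>\<in>K. \<forall>\<tau>\<subseteq>\<sigma>. \<tau> \<in> K" and "F \<in> (`) h ` K" and "G \<subseteq> F"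
  then obtain \<sigma> where \<sigma>: "\<sigma> \<in> K" "F = h ` \<sigma>" by blast
  then have "G = h ` (\<sigma> \<inter> h -` G)" using \<open>G \<subseteq> F\<close> by blast
  moreover have "\<sigma> \<inter> h -` G \<in> K" using K \<sigma>(1) by blast
  ultimately show "G \<in> (`) h ` K" by blast
qed

lemma down_closed_susp:
  assumes "down_closed K"
  shows "down_closed (susp K)"
  unfolding down_closed_def
proof (intro ballI allI impI)
  fix F G assume "F \<in> susp K" and G: "G \<subseteq> F"
  then obtain \<sigma> T where \<sigma>: "\<sigma> \<in> K" "T \<noteq> UNIV" "F = Inl ` \<sigma> \<union> Inr ` T"
    unfolding susp_def by blast
  have "G = Inl ` {a. Inl a \<in> G} \<union> Inr ` {b. Inr b \<in> G}"
    by (auto intro: sum.exhaust[of x for x])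
  moreover have "{a. Inl a \<in> G} \<in> K"
    by (rule down_closedD[OF assms \<sigma>(1)]) (use G \<sigma>(3) in auto)
  moreover have "{b. Inr b \<in> G} \<noteq> UNIV" using G \<sigma>(2,3) by auto
  ultimately show "G \<in> susp K" unfolding susp_def by blast
qed

abbreviation susp_vertex :: "'b \<Rightarrow> 'a + ('b + bool)" where
  "susp_vertex a \<equiv> Inr (Inl a)"

abbreviation south_pole :: "'a + ('b + bool)" where
  "south_pole \<equiv> Inr (Inr False)"

lemma bool_set_ne_UNIV: "T \<noteq> UNIV \<Longrightarrow> T \<subseteq> {True} \<or> T \<subseteq> {False}"
proof (rule ccontr)
  assume "\<not> (T \<subseteq> {True} \<or> T \<subseteq> {False})"
  then have "b \<in> T" for b by (cases b) auto
  then show "T \<noteq> UNIV \<Longrightarrow> False" by blast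
qed

lemma glued_susp_face_subset:
  assumes "T \<subseteq> {b}"
  shows "(\<lambda>y. if y = Inr True then Inl a0 else Inr y) ` (Inl ` \<rho> \<union> Inr ` T)
    \<subseteq> insert (if b then Inl a0 else south_pole) (susp_vertex ` \<rho>)"
proof
  fix z assume "z \<in> (\<lambda>y. if y = Inr True then Inl a0 else Inr y) ` (Inl ` \<rho> \<union> Inr ` T)"
  then obtain y where y: "y \<in> Inl ` \<rho> \<union> Inr ` T" "z = (if y = Inr True then Inl a0 else Inr y)"
    by blast
  show "z \<in> insert (if b then Inl a0 else south_pole) (susp_vertex ` \<rho>)"
  proof (cases y)
    case (Inl a)
    then show ?thesis using y by auto
  next
    case (Inr c)
    then have "c = b" using y(1) assms by auto
    then show ?thesis using y Inr by (cases b) auto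
  qed
qed

lemma sum3_cases:
  obtains (Inl) a where "z = Inl a" | (susp) a where "z = susp_vertex a" | (pole) b where "z = Inr (Inr b)"
  by (metis sum.exhaust)

lemma sum3_fun_eqI:
  assumes "\<And>a. f (Inl a) = g (Inl a)" "\<And>a. f (susp_vertex a) = g (susp_vertex a)"
    and "\<And>b. f (Inr (Inr b)) = g (Inr (Inr b))"
  shows "f = g"
proof
  fix z show "f z = g z" using assms by (cases z rule: sum3_cases) auto
qed

text \<open>Weights of the map from \<open>K\<close> to the wedge, as functions of the weight \<open>t\<close> of \<open>v\<close>. For
  \<open>t \<le> 1/3\<close> the apex \<open>u\<close> of the cone over the link inside the deletion picks up weight \<open>3t\<close>;
  for \<open>1/3 \<le> t \<le> 2/3\<close> the mass passes from the deletion into the suspension through its north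
  pole \<open>u\<close>; for \<open>t \<ge> 2/3\<close> it moves on to the south pole.\<close>
definition w_del :: "real \<Rightarrow> real" where
  "w_del t = max 0 (1 - 3*t) / max (1 - t) (1/3)"
definition w_apex :: "real \<Rightarrow> real" where
  "w_apex t = max 0 (min (3*t) (2 - 3*t))"
definition w_susp :: "real \<Rightarrow> real" where
  "w_susp t = min 3 (max 0 (3*t - 1) / max (1 - t) (1/3))"
definition w_south :: "real \<Rightarrow> real" where
  "w_south t = max 0 (3*t - 2)"
definition w_north :: "real \<Rightarrow> real" where
  "w_north t = min 1 (max 0 (2 - 3*t))"
definition w_rescale :: "real \<Rightarrow> real" where
  "w_rescale t = 1 / max (1 - t) (1/3)"

lemmas weight_defs = w_del_def w_apex_def w_susp_def w_south_def w_north_def w_rescale_def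

lemma weights_nonneg:
  "0 \<le> w_del t" "0 \<le> w_apex t" "0 \<le> w_susp t" "0 \<le> w_south t" "0 \<le> w_north t" "0 \<le> w_rescale t"
  unfolding weight_defs by auto

lemma weights_at_0:
  "w_del 0 = 1" "w_apex 0 = 0" "w_susp 0 = 0" "w_south 0 = 0" "w_north 0 = 1" "w_rescale 0 = 1"
  unfolding weight_defs by auto

lemma weights_low:
  "0 \<le> t \<Longrightarrow> t \<le> 1/3 \<Longrightarrow>
    w_del t * (1 - t) = 1 - 3*t \<and> w_apex t = 3*t \<and> w_susp t = 0 \<and> w_south t = 0 \<and> w_north t = 1"
  unfolding weight_defs by (auto simp: max_def min_def field_simps)

lemma weights_mid:
  "1/3 < t \<Longrightarrow> t \<le> 2/3 \<Longrightarrow>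
    w_del t = 0 \<and> w_apex t = 2 - 3*t \<and> w_susp t * (1 - t) = 3*t - 1 \<and> w_south t = 0 \<and> w_north t = 2 - 3*t"
  unfolding weight_defs by (auto simp: max_def min_def field_simps)

lemma weights_high:
  "2/3 < t \<Longrightarrow> w_del t = 0 \<and> w_apex t = 0 \<and> w_susp t = 3 \<and> w_south t = 3*t - 2 \<and> w_north t = 0"
  unfolding weight_defs by (auto simp: max_def min_def field_simps)

lemma w_rescale_eq: "(1 - t) * w_rescale t = (if t \<le> 2/3 then 1 else 3 * (1 - t))"
  unfolding w_rescale_def by (auto simp: max_def field_simps)

lemma weights_nonzero:
  "w_south t \<noteq> 0 \<Longrightarrow> 2/3 < t" "w_apex t \<noteq> 0 \<Longrightarrow> t < 2/3" "w_north t \<noteq> 0 \<Longrightarrow> t < 2/3"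
  unfolding weight_defs by (auto simp: max_def min_def split: if_split_asm)

lemma weight_regimes:
  fixes t :: real
  obtains "t \<le> 1/3" | "1/3 < t" "t \<le> 2/3" | "2/3 < t"
  by linarith

lemma weights_sum_Phi:
  assumes "0 \<le> t" "t \<le> 1"
  shows "w_del t * (1 - t) + w_apex t + w_susp t * (1 - t) + w_south t = 1"
  by (rule weight_regimes[of t]) (use weights_low[OF assms(1)] weights_mid weights_high in auto)

lemma weights_sum_north:
  assumes "0 \<le> t" "t \<le> 1"
  shows "w_north t + w_susp t * (1 - t) + w_south t = 1"
  by (rule weight_regimes[of t]) (use weights_low[OF assms(1)] weights_mid weights_high in auto)

lemma weights_sum_rescale:
  assumes "0 \<le> t" "t \<le> 1"
  shows "w_south t + (1 - t) * w_rescale t = 1"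
  by (rule weight_regimes[of t]) (use w_rescale_eq weights_low[OF assms(1)] weights_mid weights_high in auto)

lemma continuous_map_weights [continuous_intros]:
  assumes "continuous_map X euclideanreal h"
  shows "continuous_map X euclideanreal (\<lambda>x. w_del (h x))"
    "continuous_map X euclideanreal (\<lambda>x. w_apex (h x))"
    "continuous_map X euclideanreal (\<lambda>x. w_susp (h x))"
    "continuous_map X euclideanreal (\<lambda>x. w_south (h x))"
    "continuous_map X euclideanreal (\<lambda>x. w_north (h x))"
    "continuous_map X euclideanreal (\<lambda>x. w_rescale (h x))"
  unfolding weight_defs
  by (intro continuous_intros continuous_map_real_max continuous_map_real_min continuous_map_real_divide assms;
      simp add: max_def)+

locale coned_link =
  fixes K :: "'a set set" and V :: "'a set" and u v :: 'a
  assumes down_closed_K: "down_closed K"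
    and finite_V: "finite V" and faces_in_V: "\<And>\<sigma>. \<sigma> \<in> K \<Longrightarrow> \<sigma> \<subseteq> V"
    and u_in_V: "u \<in> V" and v_in_V: "v \<in> V" and u_ne_v: "u \<noteq> v"
    and link_coned: "\<And>\<rho>. \<rho> \<in> link K v \<Longrightarrow> insert u \<rho> \<in> K"
begin

definition K' :: "'a set set" where
  "K' = {\<sigma> \<in> K. v \<notin> \<sigma>}"

definition L :: "'a set set" where
  "L = link K v"

definition W :: "('a + ('a + bool)) set set" where
  "W = wedge K' (susp L) u (Inr True)"

definition north_face :: "'a set \<Rightarrow> ('a + ('a + bool)) set" where
  "north_face \<rho> = insert (Inl u) (susp_vertex ` \<rho>)"

definition south_face :: "'a set \<Rightarrow> ('a + ('a + bool)) set" where
  "south_face \<rho> = insert south_pole (susp_vertex ` \<rho>)"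

text \<open>The north pole \<open>Inr True\<close> of the suspension is glued to \<open>u\<close>, so the vertices of the wedge
  are \<open>Inl a\<close>, the copies \<open>susp_vertex a\<close> of link vertices, and the south pole.\<close>
definition W_vertices :: "('a + ('a + bool)) set" where
  "W_vertices = Inl ` V \<union> susp_vertex ` V \<union> {south_pole}"

lemma down_closed_K': "down_closed K'"
  using down_closed_K unfolding down_closed_def K'_def by blast

lemma K'_subset: "\<sigma> \<in> K' \<Longrightarrow> \<sigma> \<in> K \<and> \<sigma> \<subseteq> V - {v}"
  using faces_in_V unfolding K'_def by blast

lemma L_subset: "\<rho> \<in> L \<Longrightarrow> \<rho> \<in> K \<and> \<rho> \<subseteq> V - {v}"
  using faces_in_V unfolding L_def link_def by blast

lemma insert_v_link: "\<rho> \<in> L \<Longrightarrow> insert v \<rho> \<in> K"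
  unfolding L_def link_def by blast

lemma insert_u_link: "\<rho> \<in> L \<Longrightarrow> insert u \<rho> \<in> K'"
  using link_coned u_ne_v unfolding L_def link_def K'_def by blast

lemma link_of_face: "\<sigma> \<in> K \<Longrightarrow> v \<in> \<sigma> \<Longrightarrow> \<sigma> - {v} \<in> L"
  using down_closedD[OF down_closed_K, of \<sigma> "\<sigma> - {v}"] unfolding L_def link_def
  by (simp add: insert_absorb)

lemma down_closed_L: "down_closed L"
  unfolding down_closed_def
proof (intro ballI allI impI)
  fix \<rho> \<tau> assume "\<rho> \<in> L" "\<tau> \<subseteq> \<rho>"
  then have "\<tau> \<in> K" "insert v \<tau> \<in> K" "v \<notin> \<tau>"
    using L_subset down_closedD[OF down_closed_K] insert_v_link[of \<rho>] by (blast, blast, blast)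
  then show "\<tau> \<in> L" unfolding L_def link_def by blast
qed

lemma down_closed_W: "down_closed W"
  using down_closed_image[OF down_closed_K'] down_closed_image[OF down_closed_susp[OF down_closed_L]]
  unfolding W_def wedge_def down_closed_def by (meson UnE UnI1 UnI2)

lemma Inl_face_in_W: "\<sigma> \<in> K' \<Longrightarrow> Inl ` \<sigma> \<in> W"
  unfolding W_def wedge_def by blast

lemma pole_faces_in_W:
  assumes "\<rho> \<in> L"
  shows "north_face \<rho> \<in> W" "south_face \<rho> \<in> W"
proof -
  let ?glue = "\<lambda>y. if y = Inr True then Inl u else Inr y"
  have "Inl ` \<rho> \<union> Inr ` {b} \<in> susp L" for b
    using assms unfolding susp_def by blast
  moreover have "north_face \<rho> = ?glue ` (Inl ` \<rho> \<union> Inr ` {True})"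
    "south_face \<rho> = ?glue ` (Inl ` \<rho> \<union> Inr ` {False})"
    unfolding north_face_def south_face_def by auto
  ultimately show "north_face \<rho> \<in> W" "south_face \<rho> \<in> W"
    unfolding W_def wedge_def by blast+
qed

text \<open>The two poles of a suspension never lie in a common face.\<close>
lemma W_face_cases:
  assumes "F \<in> W"
  obtains (deletion) \<sigma> where "\<sigma> \<in> K'" "F \<subseteq> Inl ` \<sigma>"
    | (north) \<rho> where "\<rho> \<in> L" "F \<subseteq> north_face \<rho>"
    | (south) \<rho> where "\<rho> \<in> L" "F \<subseteq> south_face \<rho>"
proof -
  let ?glue = "\<lambda>y. if y = Inr True then Inl u else Inr y"
  consider (K') \<sigma> where "\<sigma> \<in> K'" "F = Inl ` \<sigma>"
    | (susp) X where "X \<in> susp L" "F = ?glue ` X"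
    using assms unfolding W_def wedge_def by blast
  then show ?thesis
  proof cases
    case K'
    then show ?thesis using deletion by blast
  next
    case susp
    then obtain \<rho> T where \<rho>T: "\<rho> \<in> L" "T \<noteq> UNIV" "F = ?glue ` (Inl ` \<rho> \<union> Inr ` T)"
      unfolding susp_def by blast
    from bool_set_ne_UNIV[OF \<rho>T(2)] show ?thesis
    proof
      assume "T \<subseteq> {True}"
      from glued_susp_face_subset[OF this, of u \<rho>] have "F \<subseteq> north_face \<rho>"
        unfolding \<rho>T(3) north_face_def if_True .
      with \<rho>T(1) show ?thesis by (rule north)
    next
      assume "T \<subseteq> {False}"
      from glued_susp_face_subset[OF this, of u \<rho>] have "F \<subseteq> south_face \<rho>"
        unfolding \<rho>T(3) south_face_def if_False .
      with \<rho>T(1) show ?thesis by (rule south)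
    qed
  qed
qed

lemma W_face_subset:
  assumes "F \<in> W"
  shows "F \<subseteq> W_vertices" "Inl v \<notin> F" "susp_vertex v \<notin> F"
proof -
  from assms have "F \<subseteq> W_vertices \<and> Inl v \<notin> F \<and> susp_vertex v \<notin> F"
  proof (cases rule: W_face_cases)
    case (deletion \<sigma>)
    then show ?thesis using K'_subset[of \<sigma>] unfolding W_vertices_def by blast
  next
    case (north \<rho>)
    then show ?thesis using L_subset[of \<rho>] u_in_V u_ne_v unfolding W_vertices_def north_face_def by blast
  next
    case (south \<rho>)
    then show ?thesis using L_subset[of \<rho>] unfolding W_vertices_def south_face_def by blast
  qed
  then show "F \<subseteq> W_vertices" "Inl v \<notin> F" "susp_vertex v \<notin> F"
    by blast+
qed

lemma sum_W_vertices:
  "sum g W_vertices = (\<Sum>a\<in>V. g (Inl a)) + (\<Sum>a\<in>V. g (susp_vertex a)) + g south_pole"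
proof -
  have "sum g W_vertices = sum g (Inl ` V) + sum g (susp_vertex ` V) + g south_pole"
    unfolding W_vertices_def using finite_V
    by (subst sum.union_disjoint, auto)+
  then show ?thesis by (simp add: sum.reindex inj_on_def)
qed

lemma finite_W_vertices: "finite W_vertices"
  using finite_V by (simp add: W_vertices_def)

lemma W_pointI:
  assumes "F \<in> W" "supp h \<subseteq> F" "\<And>z. 0 \<le> h z"
    and "(\<Sum>a\<in>V. h (Inl a)) + (\<Sum>a\<in>V. h (susp_vertex a)) + h south_pole = 1"
  shows "h \<in> topspace (geom W)"
  using assms W_face_subset(1)[OF assms(1)]
  by (intro geom_pointI[OF down_closed_W assms(1,2) finite_W_vertices]) (auto simp: sum_W_vertices)

lemma K_point:
  assumes f: "f \<in> topspace (geom K)"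
  shows "\<And>x. 0 \<le> f x" "supp f \<in> K" "supp f \<subseteq> V" "0 \<le> f v" "f v \<le> 1"
    and "\<And>c. (\<Sum>a\<in>V. if a = v then 0 else c * f a) = c * (1 - f v)"
proof -
  show nonneg: "\<And>x. 0 \<le> f x" and "supp f \<in> K" using geom_pointD[OF f] by auto
  then show "supp f \<subseteq> V" using faces_in_V by blast
  then have sum: "sum f V = 1" using geom_pointD(4)[OF f finite_V] by blast
  show "0 \<le> f v" by (rule nonneg)
  show "f v \<le> 1" using member_le_sum[of v V f] nonneg v_in_V finite_V sum by simp
  fix c
  have "(\<Sum>a\<in>V. if a = v then 0 else c * f a) = (\<Sum>a\<in>V - {v}. c * f a)"
    using finite_V by (simp add: sum.If_cases Diff_eq)
  also have "\<dots> = c * (1 - f v)"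
    using finite_V v_in_V sum by (simp add: sum_distrib_left[symmetric] sum_diff1)
  finally show "(\<Sum>a\<in>V. if a = v then 0 else c * f a) = c * (1 - f v)" .
qed

lemma K_point_cases:
  assumes f: "f \<in> topspace (geom K)"
  obtains (off_v) "f v = 0" "supp f \<in> K'"
    | (near_v) "f v > 0" "supp f - {v} \<in> L"
proof (cases "f v = 0")
  case True
  then show ?thesis using off_v K_point(2)[OF f] by (simp add: K'_def)
next
  case False
  then show ?thesis using near_v K_point(4)[OF f] link_of_face[OF K_point(2)[OF f]] by simp
qed

definition Phi :: "('a \<Rightarrow> real) \<Rightarrow> 'a + ('a + bool) \<Rightarrow> real" where
  "Phi f = (\<lambda>z. case z of
      Inl a \<Rightarrow> (if a = v then 0 else w_del (f v) * f a) + (if a = u then w_apex (f v) else 0)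
    | Inr (Inl a) \<Rightarrow> (if a = v then 0 else w_susp (f v) * f a)
    | Inr (Inr b) \<Rightarrow> (if b then 0 else w_south (f v)))"

lemma Phi_simps [simp]:
  "Phi f (Inl a) = (if a = v then 0 else w_del (f v) * f a) + (if a = u then w_apex (f v) else 0)"
  "Phi f (susp_vertex a) = (if a = v then 0 else w_susp (f v) * f a)"
  "Phi f (Inr (Inr b)) = (if b then 0 else w_south (f v))"
  by (simp_all add: Phi_def)

text \<open>Folds the suspension onto the cone \<open>v * L\<close>: copies of link vertices go to the link vertices,
  the south pole goes to \<open>v\<close>.\<close>
definition Psi :: "('a + ('a + bool) \<Rightarrow> real) \<Rightarrow> 'a \<Rightarrow> real" where
  "Psi g = (\<lambda>a. g (Inl a) + g (susp_vertex a) + (if a = v then g south_pole else 0))"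

definition project_from_v :: "('a \<Rightarrow> real) \<Rightarrow> 'a \<Rightarrow> real" where
  "project_from_v f = (\<lambda>a. if a = v then w_south (f v) else w_rescale (f v) * f a)"

lemma Phi_nonzeroD:
  assumes "Phi f z \<noteq> 0"
  shows "(\<exists>a. z = Inl a \<and> a \<noteq> v \<and> w_del (f v) \<noteq> 0 \<and> f a \<noteq> 0) \<or> (z = Inl u \<and> w_apex (f v) \<noteq> 0)
    \<or> (\<exists>a. z = susp_vertex a \<and> a \<noteq> v \<and> w_susp (f v) \<noteq> 0 \<and> f a \<noteq> 0)
    \<or> (z = south_pole \<and> w_south (f v) \<noteq> 0)"
proof (cases z rule: sum3_cases)
  case (Inl a) then show ?thesis using assms by (cases "a = v"; cases "a = u") auto
next
  case (susp a) then show ?thesis using assms by (cases "a = v") auto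
next
  case (pole b) then show ?thesis using assms by (cases b) auto
qed

lemma supp_Phi_in_face:
  assumes f: "f \<in> topspace (geom K)"
  obtains F where "F \<in> W" "supp (Phi f) \<subseteq> F"
  using f
proof (cases rule: K_point_cases)
  case off_v
  then have "supp (Phi f) \<subseteq> Inl ` supp f"
    using Phi_nonzeroD[of f] weights_at_0 by fastforce
  then show ?thesis using that Inl_face_in_W[OF off_v(2)] by blast
next
  case near_v
  define \<rho> where "\<rho> = supp f - {v}"
  have \<rho>: "\<rho> \<in> L" using near_v by (simp add: \<rho>_def)
  note supp = Phi_nonzeroD[of f]
  show ?thesis
  proof (rule weight_regimes[of "f v"])
    assume "f v \<le> 1/3"
    then have "supp (Phi f) \<subseteq> Inl ` insert u \<rho>"
      using supp weights_low[OF K_point(4)[OF f]] unfolding \<rho>_def by fastforce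
    then show ?thesis using that Inl_face_in_W[OF insert_u_link[OF \<rho>]] by blast
  next
    assume "1/3 < f v" "f v \<le> 2/3"
    then have "supp (Phi f) \<subseteq> north_face \<rho>"
      using supp weights_mid unfolding \<rho>_def north_face_def by fastforce
    then show ?thesis using that pole_faces_in_W(1)[OF \<rho>] by blast
  next
    assume "2/3 < f v"
    then have "supp (Phi f) \<subseteq> south_face \<rho>"
      using supp weights_high unfolding \<rho>_def south_face_def by fastforce
    then show ?thesis using that pole_faces_in_W(2)[OF \<rho>] by blast
  qed
qed

lemma Phi_in_geom_W:
  assumes f: "f \<in> topspace (geom K)"
  shows "Phi f \<in> topspace (geom W)"
proof -
  obtain F where F: "F \<in> W" "supp (Phi f) \<subseteq> F" by (rule supp_Phi_in_face[OF f])
  show ?thesis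
  proof (rule W_pointI[OF F])
    show "0 \<le> Phi f z" for z
      using K_point(1)[OF f] weights_nonneg by (cases z rule: sum3_cases) auto
    have "(\<Sum>a\<in>V. Phi f (Inl a)) = w_del (f v) * (1 - f v) + w_apex (f v)"
      using K_point(6)[OF f] u_in_V finite_V by (simp add: sum.distrib)
    moreover have "(\<Sum>a\<in>V. Phi f (susp_vertex a)) = w_susp (f v) * (1 - f v)"
      using K_point(6)[OF f] by simp
    ultimately show "(\<Sum>a\<in>V. Phi f (Inl a)) + (\<Sum>a\<in>V. Phi f (susp_vertex a)) + Phi f south_pole = 1"
      using weights_sum_Phi[OF K_point(4,5)[OF f]] by simp
  qed
qed

lemma W_point:
  assumes g: "g \<in> topspace (geom W)"
  shows "\<And>z. 0 \<le> g z" "supp g \<in> W" "g (Inl v) = 0" "g (susp_vertex v) = 0"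
    and "(\<Sum>a\<in>V. g (Inl a)) + (\<Sum>a\<in>V. g (susp_vertex a)) + g south_pole = 1"
proof -
  show "\<And>z. 0 \<le> g z" and W: "supp g \<in> W" using geom_pointD[OF g] by auto
  show "g (Inl v) = 0" "g (susp_vertex v) = 0" using W_face_subset(2,3)[OF W] by auto
  show "(\<Sum>a\<in>V. g (Inl a)) + (\<Sum>a\<in>V. g (susp_vertex a)) + g south_pole = 1"
    using geom_pointD(4)[OF g finite_W_vertices W_face_subset(1)[OF W]] by (simp add: sum_W_vertices)
qed

lemma Psi_in_geom_K:
  assumes g: "g \<in> topspace (geom W)"
  shows "Psi g \<in> topspace (geom K)"
proof -
  have supp_Psi: "supp (Psi g) \<subseteq> {a. Inl a \<in> supp g \<or> susp_vertex a \<in> supp g \<or> (a = v \<and> south_pole \<in> supp g)}"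
    by (auto simp: Psi_def)
  obtain F where F: "F \<in> K" "supp (Psi g) \<subseteq> F"
    using W_point(2)[OF g]
  proof (cases rule: W_face_cases)
    case (deletion \<sigma>)
    then have "supp (Psi g) \<subseteq> \<sigma>" using supp_Psi by blast
    then show ?thesis using that K'_subset[OF deletion(1)] by blast
  next
    case (north \<rho>)
    then have "supp (Psi g) \<subseteq> insert u \<rho>" using supp_Psi unfolding north_face_def by blast
    then show ?thesis using that K'_subset[OF insert_u_link[OF north(1)]] by blast
  next
    case (south \<rho>)
    then have "supp (Psi g) \<subseteq> insert v \<rho>" using supp_Psi unfolding south_face_def by blast
    then show ?thesis using that insert_v_link[OF south(1)] by blast
  qed
  show ?thesis
  proof (rule geom_pointI[OF down_closed_K F finite_V])
    show "supp (Psi g) \<subseteq> V" using faces_in_V[OF F(1)] F(2) by blast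
    show "0 \<le> Psi g a" for a using W_point(1)[OF g] by (simp add: Psi_def)
    show "sum (Psi g) V = 1"
      using W_point(5)[OF g] finite_V v_in_V by (simp add: Psi_def sum.distrib)
  qed
qed

lemma project_from_v_in_geom_K:
  assumes f: "f \<in> topspace (geom K)"
  shows "project_from_v f \<in> topspace (geom K)"
proof -
  have supp: "supp (project_from_v f) \<subseteq> supp f"
    using weights_nonzero(1) weights_at_0 K_point(4)[OF f] by (auto simp: project_from_v_def split: if_splits)
  show ?thesis
  proof (rule geom_pointI[OF down_closed_K K_point(2)[OF f] supp finite_V])
    show "supp (project_from_v f) \<subseteq> V" using supp K_point(3)[OF f] by blast
    show "0 \<le> project_from_v f a" for a
      using K_point(1)[OF f] weights_nonneg by (simp add: project_from_v_def)
    have "sum (project_from_v f) V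
        = (\<Sum>a\<in>V. if a = v then w_south (f v) else 0) + (\<Sum>a\<in>V. if a = v then 0 else w_rescale (f v) * f a)"
      by (simp add: project_from_v_def sum.distrib[symmetric] if_distrib cong: if_cong)
    also have "\<dots> = w_south (f v) + (1 - f v) * w_rescale (f v)"
      using K_point(6)[OF f] finite_V v_in_V by (simp add: mult.commute)
    also have "\<dots> = 1" using weights_sum_rescale K_point(4,5)[OF f] by blast
    finally show "sum (project_from_v f) V = 1" .
  qed
qed

lemma continuous_Phi: "continuous_map (geom K) (geom W) Phi"
proof (rule continuous_map_into_geom[OF Phi_in_geom_W])
  fix z :: "'a + ('a + bool)"
  show "continuous_map (geom K) euclideanreal (\<lambda>f. Phi f z)"
    by (cases z rule: sum3_cases) (auto intro!: continuous_intros)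
qed

lemma continuous_Psi: "continuous_map (geom W) (geom K) Psi"
  by (rule continuous_map_into_geom[OF Psi_in_geom_K]) (auto simp: Psi_def intro!: continuous_intros)

lemma continuous_project_from_v: "continuous_map (geom K) (geom K) project_from_v"
  by (rule continuous_map_into_geom[OF project_from_v_in_geom_K])
    (auto simp: project_from_v_def intro!: continuous_intros)

lemma Psi_Phi_homotopic_project_from_v:
  "homotopic_with (\<lambda>_. True) (geom K) (geom K) (Psi \<circ> Phi) project_from_v"
proof (rule homotopic_geom_if_contiguous[OF down_closed_K
      continuous_map_compose[OF continuous_Phi continuous_Psi] continuous_project_from_v])
  fix f assume f: "f \<in> topspace (geom K)"
  have supp: "supp ((Psi \<circ> Phi) f) \<union> supp (project_from_v f)
      \<subseteq> (supp f - {v}) \<union> {x. x = u \<and> w_apex (f v) \<noteq> 0} \<union> {x. x = v \<and> w_south (f v) \<noteq> 0}"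
    using u_ne_v by (auto simp: Psi_def project_from_v_def split: if_splits)
  obtain F where "F \<in> K" "supp ((Psi \<circ> Phi) f) \<union> supp (project_from_v f) \<subseteq> F"
    using f
  proof (cases rule: K_point_cases)
    case off_v
    then show ?thesis using that supp K_point(2)[OF f] weights_at_0 by auto
  next
    case near_v
    show ?thesis
    proof (cases "f v \<le> 2/3")
      case True
      then have "supp ((Psi \<circ> Phi) f) \<union> supp (project_from_v f) \<subseteq> insert u (supp f - {v})"
        using supp weights_nonzero(1)[of "f v"] by auto
      then show ?thesis using that K'_subset[OF insert_u_link[OF near_v(2)]] by blast
    next
      case False
      then have "supp ((Psi \<circ> Phi) f) \<union> supp (project_from_v f) \<subseteq> supp f"
        using supp weights_nonzero(2)[of "f v"] near_v(1) by force
      then show ?thesis using that K_point(2)[OF f] by blast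
    qed
  qed
  then show "supp ((Psi \<circ> Phi) f) \<union> supp (project_from_v f) \<in> K"
    using down_closedD[OF down_closed_K] by blast
qed

lemma project_from_v_homotopic_id:
  "homotopic_with (\<lambda>_. True) (geom K) (geom K) project_from_v id"
proof (rule homotopic_geom_if_contiguous[OF down_closed_K continuous_project_from_v])
  fix f assume f: "f \<in> topspace (geom K)"
  have "supp (project_from_v f) \<union> supp (id f) \<subseteq> supp f"
    using weights_nonzero(1) weights_at_0 K_point(4)[OF f] by (auto simp: project_from_v_def split: if_splits)
  then show "supp (project_from_v f) \<union> supp (id f) \<in> K"
    using down_closedD[OF down_closed_K K_point(2)[OF f]] by blast
qed simp

lemma Psi_Phi_homotopic_id: "homotopic_with (\<lambda>_. True) (geom K) (geom K) (Psi \<circ> Phi) id"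
  using Psi_Phi_homotopic_project_from_v project_from_v_homotopic_id by (rule homotopic_with_trans)

definition susp_mass :: "('a + ('a + bool) \<Rightarrow> real) \<Rightarrow> real" where
  "susp_mass g = (\<Sum>a\<in>V. g (susp_vertex a))"

definition contract_north :: "('a + ('a + bool) \<Rightarrow> real) \<Rightarrow> 'a + ('a + bool) \<Rightarrow> real" where
  "contract_north g = (\<lambda>z. case z of
      Inl a \<Rightarrow> if a = u then (g (Inl u) + susp_mass g + g south_pole) * w_north (g south_pole) else g (Inl a)
    | Inr (Inl a) \<Rightarrow> w_susp (g south_pole) * g (susp_vertex a)
    | Inr (Inr b) \<Rightarrow> if b then 0 else w_south (g south_pole))"

definition project_from_south :: "('a + ('a + bool) \<Rightarrow> real) \<Rightarrow> 'a + ('a + bool) \<Rightarrow> real" where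
  "project_from_south g = (\<lambda>z. case z of
      Inl a \<Rightarrow> g (Inl a)
    | Inr (Inl a) \<Rightarrow> w_rescale (g south_pole) * g (susp_vertex a)
    | Inr (Inr b) \<Rightarrow> if b then 0 else w_south (g south_pole))"

lemma contract_north_simps [simp]:
  "contract_north g (Inl a) =
    (if a = u then (g (Inl u) + susp_mass g + g south_pole) * w_north (g south_pole) else g (Inl a))"
  "contract_north g (susp_vertex a) = w_susp (g south_pole) * g (susp_vertex a)"
  "contract_north g (Inr (Inr b)) = (if b then 0 else w_south (g south_pole))"
  by (simp_all add: contract_north_def)

lemma project_from_south_simps [simp]:
  "project_from_south g (Inl a) = g (Inl a)"
  "project_from_south g (susp_vertex a) = w_rescale (g south_pole) * g (susp_vertex a)"
  "project_from_south g (Inr (Inr b)) = (if b then 0 else w_south (g south_pole))"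
  by (simp_all add: project_from_south_def)

lemma W_point_in_deletion:
  assumes g: "g \<in> topspace (geom W)" and "supp g \<subseteq> Inl ` \<sigma>"
  shows "Phi (Psi g) = g" "contract_north g = g" "project_from_south g = g"
proof -
  have susp: "g (Inr y) = 0" for y using assms(2) by blast
  then have "Psi g = (\<lambda>a. g (Inl a))" "susp_mass g = 0" by (auto simp: Psi_def susp_mass_def)
  then show "Phi (Psi g) = g" "contract_north g = g" "project_from_south g = g"
    using susp weights_at_0 W_point(3)[OF g] u_ne_v by (auto intro!: sum3_fun_eqI)
qed

lemma W_point_in_north_face:
  assumes g: "g \<in> topspace (geom W)" and "supp g \<subseteq> north_face \<rho>"
  shows "project_from_south g = g" "contract_north g = (\<lambda>z. if z = Inl u then 1 else 0)"
    and "supp (Phi (Psi g)) \<subseteq> Inl ` insert u \<rho>"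
proof -
  have pole: "g (Inr (Inr b)) = 0" for b using assms(2) unfolding north_face_def by blast
  have Inl: "a \<noteq> u \<Longrightarrow> g (Inl a) = 0" for a using assms(2) unfolding north_face_def by blast
  have susp: "a \<notin> \<rho> \<Longrightarrow> g (susp_vertex a) = 0" for a using assms(2) unfolding north_face_def by blast
  show "project_from_south g = g"
    using pole weights_at_0 by (intro sum3_fun_eqI) auto
  have "(\<Sum>a\<in>V. g (Inl a)) = g (Inl u)"
    using Inl u_in_V finite_V by (simp add: sum.remove[of V u] sum.neutral)
  then have "g (Inl u) + susp_mass g = 1" using W_point(5)[OF g] pole by (simp add: susp_mass_def)
  then show "contract_north g = (\<lambda>z. if z = Inl u then 1 else 0)"
    using pole Inl weights_at_0 by (intro sum3_fun_eqI) auto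
  show "supp (Phi (Psi g)) \<subseteq> Inl ` insert u \<rho>"
  proof
    fix z assume "z \<in> supp (Phi (Psi g))"
    moreover have "Psi g v = 0" using W_point(3,4)[OF g] pole by (simp add: Psi_def)
    ultimately obtain a where "z = Inl a" "Psi g a \<noteq> 0"
      using Phi_nonzeroD[of "Psi g" z] weights_at_0 by auto
    moreover have "a = u \<or> a \<in> \<rho>" if "Psi g a \<noteq> 0"
      using that Inl[of a] susp[of a] pole by (cases "a = u"; cases "a \<in> \<rho>") (auto simp: Psi_def split: if_splits)
    ultimately show "z \<in> Inl ` insert u \<rho>" by blast
  qed
qed

lemma W_point_in_south_face:
  assumes g: "g \<in> topspace (geom W)" and "supp g \<subseteq> south_face \<rho>"
  defines "t \<equiv> g south_pole"
  shows "0 \<le> t" "t \<le> 1" "susp_mass g = 1 - t"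
    and "supp (Phi (Psi g)) \<subseteq> (if w_del t = 0 then {} else Inl ` \<rho>) \<union> (if w_apex t = 0 then {} else {Inl u})
      \<union> (if w_susp t = 0 then {} else susp_vertex ` \<rho>) \<union> (if w_south t = 0 then {} else {south_pole})"
    and "supp (contract_north g) \<subseteq> (if w_north t = 0 then {} else {Inl u})
      \<union> (if w_susp t = 0 then {} else susp_vertex ` \<rho>) \<union> (if w_south t = 0 then {} else {south_pole})"
    and "supp (project_from_south g) \<subseteq> susp_vertex ` \<rho> \<union> (if w_south t = 0 then {} else {south_pole})"
proof -
  have Inl: "g (Inl a) = 0" for a using assms(2) unfolding south_face_def by blast
  have susp: "a \<notin> \<rho> \<Longrightarrow> g (susp_vertex a) = 0" for a using assms(2) unfolding south_face_def by blast
  show mass: "susp_mass g = 1 - t" using W_point(5)[OF g] Inl by (simp add: susp_mass_def t_def)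
  show "0 \<le> t" using W_point(1)[OF g] by (simp add: t_def)
  have "0 \<le> susp_mass g" unfolding susp_mass_def using W_point(1)[OF g] by (simp add: sum_nonneg)
  then show "t \<le> 1" using mass by simp
  have "Psi g v = t" using W_point(3,4)[OF g] by (simp add: Psi_def t_def)
  moreover have "a \<in> \<rho>" if "Psi g a \<noteq> 0" "a \<noteq> v" for a
    using that Inl susp[of a] by (cases "a \<in> \<rho>") (auto simp: Psi_def)
  ultimately show "supp (Phi (Psi g)) \<subseteq> (if w_del t = 0 then {} else Inl ` \<rho>) \<union> (if w_apex t = 0 then {} else {Inl u})
      \<union> (if w_susp t = 0 then {} else susp_vertex ` \<rho>) \<union> (if w_south t = 0 then {} else {south_pole})"
    using Phi_nonzeroD[of "Psi g"] by (auto split: if_splits) blast+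
  show "supp (contract_north g) \<subseteq> (if w_north t = 0 then {} else {Inl u})
      \<union> (if w_susp t = 0 then {} else susp_vertex ` \<rho>) \<union> (if w_south t = 0 then {} else {south_pole})"
  proof
    fix z assume "z \<in> supp (contract_north g)"
    then show "z \<in> (if w_north t = 0 then {} else {Inl u})
      \<union> (if w_susp t = 0 then {} else susp_vertex ` \<rho>) \<union> (if w_south t = 0 then {} else {south_pole})"
      using mass Inl susp by (cases z rule: sum3_cases) (auto simp: t_def split: if_splits)
  qed
  show "supp (project_from_south g) \<subseteq> susp_vertex ` \<rho> \<union> (if w_south t = 0 then {} else {south_pole})"
  proof
    fix z assume "z \<in> supp (project_from_south g)"
    then show "z \<in> susp_vertex ` \<rho> \<union> (if w_south t = 0 then {} else {south_pole})"
      using Inl susp by (cases z rule: sum3_cases) (auto simp: t_def split: if_splits)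
  qed
qed

lemma susp_mass_nonneg: "g \<in> topspace (geom W) \<Longrightarrow> 0 \<le> susp_mass g"
  unfolding susp_mass_def using W_point(1) by (simp add: sum_nonneg)

lemma sum_V_single: "(\<Sum>a\<in>V. if a = u then c else 0) = c"
  using finite_V u_in_V by simp

lemma contract_north_in_geom_W:
  assumes g: "g \<in> topspace (geom W)"
  shows "contract_north g \<in> topspace (geom W)"
proof -
  have nonneg: "0 \<le> contract_north g z" for z
    using W_point(1)[OF g] susp_mass_nonneg[OF g] weights_nonneg
    by (cases z rule: sum3_cases) (auto intro!: mult_nonneg_nonneg add_nonneg_nonneg)
  from W_point(2)[OF g] show ?thesis
  proof (cases rule: W_face_cases)
    case (deletion \<sigma>)
    then show ?thesis using W_point_in_deletion[OF g] g by simp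
  next
    case (north \<rho>)
    then show ?thesis
      using W_point_in_north_face(2)[OF g north(2)] pole_faces_in_W(1)[OF north(1)] sum_V_single
      by (intro W_pointI[of "north_face \<rho>"]) (auto simp: north_face_def)
  next
    case (south \<rho>)
    define t where "t = g south_pole"
    note south_facts = W_point_in_south_face[OF g south(2), folded t_def]
    obtain F where F: "F \<in> W" "supp (contract_north g) \<subseteq> F"
    proof (cases "t < 2/3")
      case True
      then have "supp (contract_north g) \<subseteq> north_face \<rho>"
        using south_facts(5) weights_nonzero(1)[of t] unfolding north_face_def by (auto split: if_splits)
      then show ?thesis using that pole_faces_in_W(1)[OF south(1)] by blast
    next
      case False
      then have "supp (contract_north g) \<subseteq> south_face \<rho>"
        using south_facts(5) weights_nonzero(3)[of t] unfolding south_face_def by (auto split: if_splits)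
      then show ?thesis using that pole_faces_in_W(2)[OF south(1)] by blast
    qed
    have "g (Inl a) = 0" for a using south(2) unfolding south_face_def by blast
    then have "contract_north g (Inl a) = (if a = u then w_north t else 0)" for a
      using south_facts(3) by (simp add: t_def)
    then have "(\<Sum>a\<in>V. contract_north g (Inl a)) = w_north t"
      using sum_V_single by simp
    moreover have "(\<Sum>a\<in>V. contract_north g (susp_vertex a)) = w_susp t * (1 - t)"
      using south_facts(3) by (simp add: t_def[symmetric] sum_distrib_left[symmetric] susp_mass_def)
    ultimately show ?thesis
      using weights_sum_north[OF south_facts(1,2)] by (intro W_pointI[OF F nonneg]) (simp add: t_def)
  qed
qed

lemma project_from_south_in_geom_W:
  assumes g: "g \<in> topspace (geom W)"
  shows "project_from_south g \<in> topspace (geom W)"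
  using W_point(2)[OF g]
proof (cases rule: W_face_cases)
  case (deletion \<sigma>)
  then show ?thesis using W_point_in_deletion[OF g] g by simp
next
  case (north \<rho>)
  then show ?thesis using W_point_in_north_face[OF g] g by simp
next
  case (south \<rho>)
  define t where "t = g south_pole"
  note south_facts = W_point_in_south_face[OF g south(2), folded t_def]
  show ?thesis
  proof (rule W_pointI[OF pole_faces_in_W(2)[OF south(1)]])
    show "supp (project_from_south g) \<subseteq> south_face \<rho>"
      using south_facts(6) unfolding south_face_def by (auto split: if_splits)
    show "0 \<le> project_from_south g z" for z
      using W_point(1)[OF g] weights_nonneg by (cases z rule: sum3_cases) auto
    have "g (Inl a) = 0" for a using south(2) unfolding south_face_def by blast
    moreover have "(\<Sum>a\<in>V. project_from_south g (susp_vertex a)) = (1 - t) * w_rescale t"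
      using south_facts(3) by (simp add: t_def[symmetric] sum_distrib_left[symmetric] susp_mass_def mult.commute)
    ultimately show "(\<Sum>a\<in>V. project_from_south g (Inl a)) + (\<Sum>a\<in>V. project_from_south g (susp_vertex a))
        + project_from_south g south_pole = 1"
      using weights_sum_rescale[OF south_facts(1,2)] by (simp add: t_def)
  qed
qed

lemma continuous_contract_north: "continuous_map (geom W) (geom W) contract_north"
proof (rule continuous_map_into_geom[OF contract_north_in_geom_W])
  fix z :: "'a + ('a + bool)"
  show "continuous_map (geom W) euclideanreal (\<lambda>g. contract_north g z)"
    by (cases z rule: sum3_cases) (auto simp: susp_mass_def finite_V intro!: continuous_intros)
qed

lemma continuous_project_from_south: "continuous_map (geom W) (geom W) project_from_south"
proof (rule continuous_map_into_geom[OF project_from_south_in_geom_W])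
  fix z :: "'a + ('a + bool)"
  show "continuous_map (geom W) euclideanreal (\<lambda>g. project_from_south g z)"
    by (cases z rule: sum3_cases) (auto intro!: continuous_intros)
qed

lemma W_union_face: "F \<in> W \<Longrightarrow> A \<subseteq> F \<Longrightarrow> B \<subseteq> F \<Longrightarrow> A \<union> B \<in> W"
  using down_closedD[OF down_closed_W] by (metis Un_least)

lemma Phi_Psi_homotopic_contract_north:
  "homotopic_with (\<lambda>_. True) (geom W) (geom W) (Phi \<circ> Psi) contract_north"
proof (rule homotopic_geom_if_contiguous[OF down_closed_W
      continuous_map_compose[OF continuous_Psi continuous_Phi] continuous_contract_north])
  fix g assume g: "g \<in> topspace (geom W)"
  from W_point(2)[OF g] show "supp ((Phi \<circ> Psi) g) \<union> supp (contract_north g) \<in> W"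
  proof (cases rule: W_face_cases)
    case (deletion \<sigma>)
    then show ?thesis using W_point_in_deletion[OF g] W_point(2)[OF g] by simp
  next
    case (north \<rho>)
    have "supp (contract_north g) \<subseteq> Inl ` insert u \<rho>"
      unfolding W_point_in_north_face(2)[OF g north(2)] by auto
    then show ?thesis
      using W_union_face[OF Inl_face_in_W[OF insert_u_link[OF north(1)]]] W_point_in_north_face(3)[OF g north(2)]
      by simp
  next
    case (south \<rho>)
    define t where "t = g south_pole"
    note south_facts = W_point_in_south_face[OF g south(2), folded t_def]
    show ?thesis
    proof (rule weight_regimes[of t])
      assume "t \<le> 1/3"
      then have "supp (Phi (Psi g)) \<subseteq> Inl ` insert u \<rho>" "supp (contract_north g) \<subseteq> Inl ` insert u \<rho>"
        using south_facts(4,5) weights_low[OF south_facts(1)] by (auto split: if_splits)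
      then show ?thesis using W_union_face[OF Inl_face_in_W[OF insert_u_link[OF south(1)]]] by simp
    next
      assume "1/3 < t" "t \<le> 2/3"
      then have "supp (Phi (Psi g)) \<subseteq> north_face \<rho>" "supp (contract_north g) \<subseteq> north_face \<rho>"
        using south_facts(4,5) weights_mid unfolding north_face_def by (auto split: if_splits)
      then show ?thesis using W_union_face[OF pole_faces_in_W(1)[OF south(1)]] by simp
    next
      assume "2/3 < t"
      then have "supp (Phi (Psi g)) \<subseteq> south_face \<rho>" "supp (contract_north g) \<subseteq> south_face \<rho>"
        using south_facts(4,5) weights_high unfolding south_face_def by (auto split: if_splits)
      then show ?thesis using W_union_face[OF pole_faces_in_W(2)[OF south(1)]] by simp
    qed
  qed
qed

lemma contract_north_homotopic_project_from_south:
  "homotopic_with (\<lambda>_. True) (geom W) (geom W) contract_north project_from_south"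
proof (rule homotopic_geom_if_contiguous[OF down_closed_W continuous_contract_north continuous_project_from_south])
  fix g assume g: "g \<in> topspace (geom W)"
  from W_point(2)[OF g] show "supp (contract_north g) \<union> supp (project_from_south g) \<in> W"
  proof (cases rule: W_face_cases)
    case (deletion \<sigma>)
    then show ?thesis using W_point_in_deletion[OF g] W_point(2)[OF g] by simp
  next
    case (north \<rho>)
    have "supp (contract_north g) \<subseteq> north_face \<rho>"
      unfolding W_point_in_north_face(2)[OF g north(2)] north_face_def by auto
    then show ?thesis
      using W_union_face[OF pole_faces_in_W(1)[OF north(1)]] W_point_in_north_face(1)[OF g north(2)] north(2)
      by simp
  next
    case (south \<rho>)
    define t where "t = g south_pole"
    note south_facts = W_point_in_south_face[OF g south(2), folded t_def]
    show ?thesis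
    proof (cases "t < 2/3")
      case True
      then have "supp (contract_north g) \<subseteq> north_face \<rho>" "supp (project_from_south g) \<subseteq> north_face \<rho>"
        using south_facts(5,6) weights_nonzero(1)[of t] unfolding north_face_def by (auto split: if_splits)
      then show ?thesis using W_union_face[OF pole_faces_in_W(1)[OF south(1)]] by simp
    next
      case False
      then have "supp (contract_north g) \<subseteq> south_face \<rho>" "supp (project_from_south g) \<subseteq> south_face \<rho>"
        using south_facts(5,6) weights_nonzero(3)[of t] unfolding south_face_def by (auto split: if_splits)
      then show ?thesis using W_union_face[OF pole_faces_in_W(2)[OF south(1)]] by simp
    qed
  qed
qed

lemma project_from_south_homotopic_id:
  "homotopic_with (\<lambda>_. True) (geom W) (geom W) project_from_south id"
proof (rule homotopic_geom_if_contiguous[OF down_closed_W continuous_project_from_south])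
  fix g assume g: "g \<in> topspace (geom W)"
  from W_point(2)[OF g] show "supp (project_from_south g) \<union> supp (id g) \<in> W"
  proof (cases rule: W_face_cases)
    case (deletion \<sigma>)
    then show ?thesis using W_point_in_deletion[OF g] W_point(2)[OF g] by simp
  next
    case (north \<rho>)
    then show ?thesis using W_point_in_north_face(1)[OF g] W_point(2)[OF g] by simp
  next
    case (south \<rho>)
    have "supp (project_from_south g) \<subseteq> south_face \<rho>"
      using W_point_in_south_face(6)[OF g south(2)] unfolding south_face_def by (auto split: if_splits)
    then show ?thesis using W_union_face[OF pole_faces_in_W(2)[OF south(1)] _ south(2)] by simp
  qed
qed simp

lemma Phi_Psi_homotopic_id: "homotopic_with (\<lambda>_. True) (geom W) (geom W) (Phi \<circ> Psi) id"
  using Phi_Psi_homotopic_contract_north contract_north_homotopic_project_from_south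
    project_from_south_homotopic_id by (meson homotopic_with_trans)

theorem htpy_eq_wedge_susp_link: "K \<simeq>\<^sub>c W"
  unfolding htpy_eq_def homotopy_equivalent_space_def
  using continuous_Phi continuous_Psi Psi_Phi_homotopic_id Phi_Psi_homotopic_id by blast

end

section \<open>Bounded independence complexes\<close>

definition indep_bounded :: "('a \<Rightarrow> 'a \<Rightarrow> bool) \<Rightarrow> nat \<Rightarrow> 'a set \<Rightarrow> bool" where
  "indep_bounded E d \<sigma> \<longleftrightarrow> (\<forall>S\<subseteq>\<sigma>. indep E S \<longrightarrow> card S < d)"

lemma alpha_less_iff_indep_bounded:
  assumes "finite \<sigma>"
  shows "alpha E \<sigma> < d \<longleftrightarrow> indep_bounded E d \<sigma>"
proof -
  have "{} \<in> {S. S \<subseteq> \<sigma> \<and> indep E S}" by (simp add: indep_def)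
  then show ?thesis
    using assms by (subst alpha_def, subst Max_less_iff) (auto simp: indep_bounded_def)
qed

lemma BI_eq:
  assumes "finite V"
  shows "BI d V E = {\<sigma>. \<sigma> \<subseteq> V \<and> indep_bounded E d \<sigma>}"
  using alpha_less_iff_indep_bounded assms finite_subset unfolding BI_def by blast

lemma down_closed_BI: "finite V \<Longrightarrow> down_closed (BI d V E)"
  unfolding down_closed_def BI_eq indep_bounded_def by blast

lemma BI_del_edges:
  assumes "finite V"
  shows "BI d (V - {v}) (del_edges E v) = {\<sigma> \<in> BI d V E. v \<notin> \<sigma>}"
proof -
  have "indep (del_edges E v) S \<longleftrightarrow> indep E S" if "v \<notin> S" for S
    using that unfolding indep_def del_edges_def by blast
  then have "indep_bounded (del_edges E v) d \<sigma> \<longleftrightarrow> indep_bounded E d \<sigma>" if "v \<notin> \<sigma>" for \<sigma>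
    using that unfolding indep_bounded_def by blast
  then show ?thesis using assms by (auto simp: BI_eq)
qed

lemma indep_bounded_insert_twin:
  assumes G: "simple_graph V E" and "finite \<sigma>" and "u \<noteq> v" and bounded: "indep_bounded E d (insert v \<sigma>)"
    and nbhd: "\<And>x. E v x \<Longrightarrow> x = u \<or> E u x" and adjacent: "v \<in> \<sigma> \<Longrightarrow> E u v"
  shows "indep_bounded E d (insert u \<sigma>)"
  unfolding indep_bounded_def
proof (intro allI impI)
  fix S assume S: "S \<subseteq> insert u \<sigma>" and indep: "indep E S"
  have sym: "E x y \<Longrightarrow> E y x" and irrefl: "\<not> E x x" for x y
    using G unfolding simple_graph_def by blast+
  show "card S < d"
  proof (cases "u \<in> S")
    case False
    then show ?thesis using S indep bounded unfolding indep_bounded_def by blast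
  next
    case True
    have "finite S" using S \<open>finite \<sigma>\<close> finite_subset by blast
    have "v \<notin> S"
      using True S indep adjacent \<open>u \<noteq> v\<close> unfolding indep_def by blast
    have "\<not> E v x" if "x \<in> S - {u}" for x
      using that nbhd[of x] True indep unfolding indep_def by blast
    then have "indep E (insert v (S - {u}))"
      using indep irrefl sym unfolding indep_def by blast
    moreover have "insert v (S - {u}) \<subseteq> insert v \<sigma>" using S by blast
    ultimately have "card (insert v (S - {u})) < d"
      using bounded unfolding indep_bounded_def by blast
    then show ?thesis
      using \<open>finite S\<close> \<open>v \<notin> S\<close> True by (simp add: card_Suc_Diff1)
  qed
qed

lemma insert_twin_in_BI:
  assumes G: "simple_graph V E" and "u \<in> V" "u \<noteq> v" and \<sigma>: "insert v \<sigma> \<in> BI d V E"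
    and nbhd: "\<And>x. E v x \<Longrightarrow> x = u \<or> E u x" and adjacent: "v \<in> \<sigma> \<Longrightarrow> E u v"
  shows "insert u \<sigma> \<in> BI d V E"
proof -
  have "finite V" using G unfolding simple_graph_def by blast
  then have "insert v \<sigma> \<subseteq> V" "indep_bounded E d (insert v \<sigma>)" "finite \<sigma>"
    using \<sigma> by (auto simp: BI_eq intro: finite_subset)
  then show ?thesis
    using indep_bounded_insert_twin[OF G _ \<open>u \<noteq> v\<close> _ nbhd adjacent] \<open>u \<in> V\<close> \<open>finite V\<close>
    by (simp add: BI_eq)
qed

lemma BI_htpy_eq_delete_if_closed_nbhd_subset:
  assumes G: "simple_graph V E" and "u \<in> V" "v \<in> V" "u \<noteq> v"
    and "closed_nbhd V E v \<subseteq> closed_nbhd V E u"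
  shows "BI d V E \<simeq>\<^sub>c BI d (V - {v}) (del_edges E v)"
proof -
  have "finite V" "\<And>x y. E x y \<Longrightarrow> y \<in> V" using G unfolding simple_graph_def by blast+
  with assms(3-5) have "E u v" "\<And>x. E v x \<Longrightarrow> x = u \<or> E u x"
    unfolding closed_nbhd_def open_nbhd_def by auto
  then show ?thesis
    unfolding BI_del_edges[OF \<open>finite V\<close>]
    using insert_twin_in_BI[OF G \<open>u \<in> V\<close> \<open>u \<noteq> v\<close>] down_closed_BI[OF \<open>finite V\<close>] \<open>u \<noteq> v\<close>
    by (intro htpy_eq_delete_dominated_vertex) (auto simp: insert_absorb)
qed

lemma BI_htpy_eq_wedge_if_open_nbhd_subset:
  assumes G: "simple_graph V E" and "u \<in> V" "v \<in> V" "u \<noteq> v"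
    and "open_nbhd V E v \<subseteq> open_nbhd V E u"
  shows "BI d V E \<simeq>\<^sub>c wedge (BI d (V - {v}) (del_edges E v)) (susp (link (BI d V E) v)) u (Inr True)"
proof -
  have "finite V" "\<And>x y. E x y \<Longrightarrow> y \<in> V" using G unfolding simple_graph_def by blast+
  with assms(5) have nbhd: "\<And>x. E v x \<Longrightarrow> E u x" unfolding open_nbhd_def by auto
  interpret coned_link "BI d V E" V u v
  proof
    show "down_closed (BI d V E)" by (rule down_closed_BI[OF \<open>finite V\<close>])
    show "\<sigma> \<in> BI d V E \<Longrightarrow> \<sigma> \<subseteq> V" for \<sigma> by (simp add: BI_def)
    show "\<rho> \<in> link (BI d V E) v \<Longrightarrow> insert u \<rho> \<in> BI d V E" for \<rho>
      using insert_twin_in_BI[OF G \<open>u \<in> V\<close> \<open>u \<noteq> v\<close>, of \<rho> d] nbhd unfolding link_def by blast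
  qed (use assms(2-4) \<open>finite V\<close> in auto)
  show ?thesis
    using htpy_eq_wedge_susp_link unfolding W_def K'_def L_def BI_del_edges[OF \<open>finite V\<close>] .
qed

theorem mainTheorem18:
  fixes V :: "'a set" and E :: "'a \<Rightarrow> 'a \<Rightarrow> bool" and d :: nat
  assumes "simple_graph V E" and "d \<ge> 2" and "card V \<ge> 2"
  shows "(\<forall>u\<in>V. \<forall>v\<in>V. u \<noteq> v \<and> closed_nbhd V E v \<subseteq> closed_nbhd V E u
            \<longrightarrow> BI d V E \<simeq>\<^sub>c BI d (V - {v}) (del_edges E v))
       \<and> (\<forall>u\<in>V. \<forall>v\<in>V. u \<noteq> v \<and> open_nbhd V E v \<subseteq> open_nbhd V E u
            \<longrightarrow> (\<exists>a0\<in>V - {v}. BI d V E \<simeq>\<^sub>c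
                  wedge (BI d (V - {v}) (del_edges E v)) (susp (link (BI d V E) v)) a0 (Inr True)))"
  using BI_htpy_eq_delete_if_closed_nbhd_subset[OF assms(1)]
    BI_htpy_eq_wedge_if_open_nbhd_subset[OF assms(1)] by blast

end
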